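(* Let $\mathcal T$ consist of projective objects and be contravariantly finite in $\mathcal A$, and let $f:X\to Y$ be an epimorphism in $\mathcal A$. Then $\overline f$ is a strong monomorphism in the left triangulated category $\underline{\mathcal A}$ if and only if $\ker(f)\in\mathcal T$.
   Context: $\mathcal A$ is abelian, $\mathcal T$ a full additive subcategory closed under finite direct sums and direct summands; $\underline{\mathcal A}=\mathcal A/\langle\mathcal T\rangle$ is the stable category, $\overline f$ the class of $f$. For $\mathcal T$ contravariantly finite, $\underline{\mathcal A}$ is left triangulated: $\Omega Y=\ker(p_Y)$ for a $\mathcal T$-precover $p_Y:T_Y\to Y$; for $f:X\to Y$ one forms the pullback $Z$ of $f$ and $p_Y$ with projection $g:Z\to X$ and induced $\Omega Y\to Z$; left triangles are diagrams isomorphic to $\Omega Y\to Z\xrightarrow{\overline g}X\xrightarrow{\overline f}Y$. $\overline f$ is a strong monomorphism if there is a left triangle $\Omega Y\to0\to X\xrightarrow{\overline f}Y$. *)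

theory Defs
  imports Main
begin

record ('o, 'm) cat =
  Ob  :: "'o set"
  Ar  :: "'m set"
  dom :: "'m \<Rightarrow> 'o"
  cod :: "'m \<Rightarrow> 'o"
  cmp :: "'m \<Rightarrow> 'm \<Rightarrow> 'm"   \<comment> \<open>cmp g f = g \<circ> f\<close>
  idt :: "'o \<Rightarrow> 'm"
  add :: "'m \<Rightarrow> 'm \<Rightarrow> 'm"
  zer :: "'o \<Rightarrow> 'o \<Rightarrow> 'm"
  neg :: "'m \<Rightarrow> 'm"

definition hom :: "('o,'m) cat \<Rightarrow> 'o \<Rightarrow> 'o \<Rightarrow> 'm set" where
  "hom C X Y = {f \<in> Ar C. dom C f = X \<and> cod C f = Y}"

definition category :: "('o,'m) cat \<Rightarrow> bool" where
  "category C \<longleftrightarrow>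
     (\<forall>f\<in>Ar C. dom C f \<in> Ob C \<and> cod C f \<in> Ob C) \<and>
     (\<forall>X\<in>Ob C. idt C X \<in> hom C X X) \<and>
     (\<forall>X Y Z f g. f \<in> hom C X Y \<longrightarrow> g \<in> hom C Y Z \<longrightarrow> cmp C g f \<in> hom C X Z) \<and>
     (\<forall>W X Y Z f g h. f \<in> hom C W X \<longrightarrow> g \<in> hom C X Y \<longrightarrow> h \<in> hom C Y Z \<longrightarrow>
        cmp C h (cmp C g f) = cmp C (cmp C h g) f) \<and>
     (\<forall>X Y f. f \<in> hom C X Y \<longrightarrow> cmp C (idt C Y) f = f \<and> cmp C f (idt C X) = f)"

definition preadditive :: "('o,'m) cat \<Rightarrow> bool" where
  "preadditive C \<longleftrightarrow> category C \<and>
     (\<forall>X\<in>Ob C. \<forall>Y\<in>Ob C. zer C X Y \<in> hom C X Y) \<and>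
     (\<forall>X Y f g. f \<in> hom C X Y \<longrightarrow> g \<in> hom C X Y \<longrightarrow>
        add C f g \<in> hom C X Y \<and> neg C f \<in> hom C X Y \<and>
        add C f g = add C g f \<and> add C f (zer C X Y) = f \<and> add C f (neg C f) = zer C X Y) \<and>
     (\<forall>X Y f g h. f \<in> hom C X Y \<longrightarrow> g \<in> hom C X Y \<longrightarrow> h \<in> hom C X Y \<longrightarrow>
        add C (add C f g) h = add C f (add C g h)) \<and>
     (\<forall>X Y Z f g g'. f \<in> hom C X Y \<longrightarrow> g \<in> hom C Y Z \<longrightarrow> g' \<in> hom C Y Z \<longrightarrow>
        cmp C (add C g g') f = add C (cmp C g f) (cmp C g' f)) \<and>
     (\<forall>X Y Z f f' h. f \<in> hom C X Y \<longrightarrow> f' \<in> hom C X Y \<longrightarrow> h \<in> hom C Y Z \<longrightarrow>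
        cmp C h (add C f f') = add C (cmp C h f) (cmp C h f'))"

definition zero_obj :: "('o,'m) cat \<Rightarrow> 'o \<Rightarrow> bool" where
  "zero_obj C Z0obj \<longleftrightarrow> Z0obj \<in> Ob C \<and> idt C Z0obj = zer C Z0obj Z0obj"

definition is_biproduct ::
  "('o,'m) cat \<Rightarrow> 'o \<Rightarrow> 'o \<Rightarrow> 'o \<Rightarrow> 'm \<Rightarrow> 'm \<Rightarrow> 'm \<Rightarrow> 'm \<Rightarrow> bool" where
  "is_biproduct C X Y B i1 i2 p1 p2 \<longleftrightarrow>
     X \<in> Ob C \<and> Y \<in> Ob C \<and> B \<in> Ob C \<and>
     i1 \<in> hom C X B \<and> i2 \<in> hom C Y B \<and> p1 \<in> hom C B X \<and> p2 \<in> hom C B Y \<and>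
     cmp C p1 i1 = idt C X \<and> cmp C p2 i2 = idt C Y \<and>
     cmp C p1 i2 = zer C Y X \<and> cmp C p2 i1 = zer C X Y \<and>
     add C (cmp C i1 p1) (cmp C i2 p2) = idt C B"

definition additive :: "('o,'m) cat \<Rightarrow> bool" where
  "additive C \<longleftrightarrow> preadditive C \<and> (\<exists>Z0obj. zero_obj C Z0obj) \<and>
     (\<forall>X\<in>Ob C. \<forall>Y\<in>Ob C. \<exists>B i1 i2 p1 p2. is_biproduct C X Y B i1 i2 p1 p2)"

definition mono :: "('o,'m) cat \<Rightarrow> 'o \<Rightarrow> 'o \<Rightarrow> 'm \<Rightarrow> bool" where
  "mono C X Y f \<longleftrightarrow> f \<in> hom C X Y \<and>
     (\<forall>W g h. g \<in> hom C W X \<longrightarrow> h \<in> hom C W X \<longrightarrow> cmp C f g = cmp C f h \<longrightarrow> g = h)"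

definition epi :: "('o,'m) cat \<Rightarrow> 'o \<Rightarrow> 'o \<Rightarrow> 'm \<Rightarrow> bool" where
  "epi C X Y f \<longleftrightarrow> f \<in> hom C X Y \<and>
     (\<forall>W g h. g \<in> hom C Y W \<longrightarrow> h \<in> hom C Y W \<longrightarrow> cmp C g f = cmp C h f \<longrightarrow> g = h)"

definition is_kernel :: "('o,'m) cat \<Rightarrow> 'o \<Rightarrow> 'o \<Rightarrow> 'm \<Rightarrow> 'o \<Rightarrow> 'm \<Rightarrow> bool" where
  "is_kernel C X Y f K k \<longleftrightarrow> f \<in> hom C X Y \<and> K \<in> Ob C \<and> k \<in> hom C K X \<and>
     cmp C f k = zer C K Y \<and>
     (\<forall>W g. g \<in> hom C W X \<and> cmp C f g = zer C W Y \<longrightarrow>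
        (\<exists>!h. h \<in> hom C W K \<and> cmp C k h = g))"

definition is_cokernel :: "('o,'m) cat \<Rightarrow> 'o \<Rightarrow> 'o \<Rightarrow> 'm \<Rightarrow> 'o \<Rightarrow> 'm \<Rightarrow> bool" where
  "is_cokernel C X Y f Q q \<longleftrightarrow> f \<in> hom C X Y \<and> Q \<in> Ob C \<and> q \<in> hom C Y Q \<and>
     cmp C q f = zer C X Q \<and>
     (\<forall>W g. g \<in> hom C Y W \<and> cmp C g f = zer C X W \<longrightarrow>
        (\<exists>!h. h \<in> hom C Q W \<and> cmp C h q = g))"

definition abelian :: "('o,'m) cat \<Rightarrow> bool" where
  "abelian C \<longleftrightarrow> additive C \<and>
     (\<forall>X Y f. f \<in> hom C X Y \<longrightarrow> (\<exists>K k. is_kernel C X Y f K k)) \<and>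
     (\<forall>X Y f. f \<in> hom C X Y \<longrightarrow> (\<exists>Q q. is_cokernel C X Y f Q q)) \<and>
     (\<forall>X Y f. mono C X Y f \<longrightarrow> (\<exists>Z g. is_kernel C Y Z g X f)) \<and>
     (\<forall>X Y f. epi C X Y f \<longrightarrow> (\<exists>Z g. is_cokernel C Z X g Y f))"

definition closed_additive_subcat :: "('o,'m) cat \<Rightarrow> 'o set \<Rightarrow> bool" where
  "closed_additive_subcat C T \<longleftrightarrow> T \<subseteq> Ob C \<and>
     (\<forall>Z0obj. zero_obj C Z0obj \<longrightarrow> Z0obj \<in> T) \<and>
     (\<forall>X Y B i1 i2 p1 p2. is_biproduct C X Y B i1 i2 p1 p2 \<longrightarrow>
        (B \<in> T \<longleftrightarrow> X \<in> T \<and> Y \<in> T))"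

definition projective :: "('o,'m) cat \<Rightarrow> 'o \<Rightarrow> bool" where
  "projective C P \<longleftrightarrow> P \<in> Ob C \<and>
     (\<forall>M N e g. epi C M N e \<longrightarrow> g \<in> hom C P N \<longrightarrow> (\<exists>h\<in>hom C P M. cmp C e h = g))"

definition T_precover :: "('o,'m) cat \<Rightarrow> 'o set \<Rightarrow> 'o \<Rightarrow> 'o \<Rightarrow> 'm \<Rightarrow> bool" where
  "T_precover C T Y TY p \<longleftrightarrow> TY \<in> T \<and> p \<in> hom C TY Y \<and>
     (\<forall>W t. W \<in> T \<longrightarrow> t \<in> hom C W Y \<longrightarrow> (\<exists>u\<in>hom C W TY. cmp C p u = t))"

definition contravariantly_finite :: "('o,'m) cat \<Rightarrow> 'o set \<Rightarrow> bool" where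
  "contravariantly_finite C T \<longleftrightarrow> (\<forall>Y\<in>Ob C. \<exists>TY p. T_precover C T Y TY p)"

text \<open>Stable category A / \<langle>T\<rangle>: f, g : X \<rightarrow> Y have the same class iff f - g factors
  through an object of T. Stable morphisms are handled via representatives.\<close>
definition stable_eq :: "('o,'m) cat \<Rightarrow> 'o set \<Rightarrow> 'o \<Rightarrow> 'o \<Rightarrow> 'm \<Rightarrow> 'm \<Rightarrow> bool" where
  "stable_eq C T X Y f g \<longleftrightarrow> f \<in> hom C X Y \<and> g \<in> hom C X Y \<and>
     (\<exists>W\<in>T. \<exists>u\<in>hom C X W. \<exists>v\<in>hom C W Y. add C f (neg C g) = cmp C v u)"

definition stable_iso :: "('o,'m) cat \<Rightarrow> 'o set \<Rightarrow> 'o \<Rightarrow> 'o \<Rightarrow> 'm \<Rightarrow> bool" where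
  "stable_iso C T X Y a \<longleftrightarrow> a \<in> hom C X Y \<and>
     (\<exists>b\<in>hom C Y X. stable_eq C T X X (cmp C b a) (idt C X) \<and>
                    stable_eq C T Y Y (cmp C a b) (idt C Y))"

definition is_pullback ::
  "('o,'m) cat \<Rightarrow> 'o \<Rightarrow> 'o \<Rightarrow> 'o \<Rightarrow> 'm \<Rightarrow> 'm \<Rightarrow> 'o \<Rightarrow> 'm \<Rightarrow> 'm \<Rightarrow> bool" where
  "is_pullback C X Y TY f p Z g q \<longleftrightarrow> f \<in> hom C X Y \<and> p \<in> hom C TY Y \<and>
     Z \<in> Ob C \<and> g \<in> hom C Z X \<and> q \<in> hom C Z TY \<and> cmp C f g = cmp C p q \<and>
     (\<forall>W a b. a \<in> hom C W X \<longrightarrow> b \<in> hom C W TY \<longrightarrow> cmp C f a = cmp C p b \<longrightarrow>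
        (\<exists>!h. h \<in> hom C W Z \<and> cmp C g h = a \<and> cmp C q h = b))"

text \<open>Standard left triangle  OmegaY --w--> Z --g--> X --f--> Y  where OmegaY = K is the kernel of a
  T-precover p : TY \<rightarrow> Y, Z is the pullback of f and p, and w is the induced map.\<close>
definition std_left_triangle ::
  "('o,'m) cat \<Rightarrow> 'o set \<Rightarrow> 'o \<Rightarrow> 'o \<Rightarrow> 'o \<Rightarrow> 'o \<Rightarrow> 'm \<Rightarrow> 'm \<Rightarrow> 'm \<Rightarrow> bool" where
  "std_left_triangle C T K Z X Y w g f \<longleftrightarrow>
     (\<exists>TY p k q. T_precover C T Y TY p \<and> is_kernel C TY Y p K k \<and>
        is_pullback C X Y TY f p Z g q \<and>
        w \<in> hom C K Z \<and> cmp C g w = zer C K X \<and> cmp C q w = k)"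

definition left_triangle ::
  "('o,'m) cat \<Rightarrow> 'o set \<Rightarrow> 'o \<Rightarrow> 'o \<Rightarrow> 'o \<Rightarrow> 'o \<Rightarrow> 'm \<Rightarrow> 'm \<Rightarrow> 'm \<Rightarrow> bool" where
  "left_triangle C T K Z X Y a b c \<longleftrightarrow>
     a \<in> hom C K Z \<and> b \<in> hom C Z X \<and> c \<in> hom C X Y \<and>
     (\<exists>K0 Z0 X0 Y0 w g f \<phi>1 \<phi>2 \<phi>3 \<phi>4.
        std_left_triangle C T K0 Z0 X0 Y0 w g f \<and>
        stable_iso C T K K0 \<phi>1 \<and> stable_iso C T Z Z0 \<phi>2 \<and>
        stable_iso C T X X0 \<phi>3 \<and> stable_iso C T Y Y0 \<phi>4 \<and>
        stable_eq C T K Z0 (cmp C w \<phi>1) (cmp C \<phi>2 a) \<and>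
        stable_eq C T Z X0 (cmp C g \<phi>2) (cmp C \<phi>3 b) \<and>
        stable_eq C T X Y0 (cmp C f \<phi>3) (cmp C \<phi>4 c))"

definition strong_mono :: "('o,'m) cat \<Rightarrow> 'o set \<Rightarrow> 'o \<Rightarrow> 'o \<Rightarrow> 'm \<Rightarrow> bool" where
  "strong_mono C T X Y f \<longleftrightarrow> f \<in> hom C X Y \<and>
     (\<exists>TY p K k Z0obj. T_precover C T Y TY p \<and> is_kernel C TY Y p K k \<and> zero_obj C Z0obj \<and>
        left_triangle C T K Z0obj X Y (zer C K Z0obj) (zer C Z0obj X) f)"

end

theory Submission
  imports Defs
begin

text \<open>If K \<in> T, the pullback of f along a T-precover p : TY \<rightarrow> Y is K \<oplus> TY \<in> T, so the
  standard left triangle of f is stably isomorphic to \<Omega>Y \<rightarrow> 0 \<rightarrow> X \<rightarrow> Y.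

  Conversely, a left triangle \<Omega>Y \<rightarrow> 0 \<rightarrow> X \<rightarrow> Y is stably isomorphic to the standard
  triangle of some f0 whose middle term then lies in T. Comparing precovers and pullbacks along
  these isomorphisms shows that f is a stable monomorphism, so the kernel inclusion k is T-null,
  and that the connecting map \<Omega>Y \<rightarrow> K induced by a lift a of p along f is T-null. Writing k
  through an object of T and correcting with a then decomposes id_K into two T-null maps, so K is
  a summand of an object of T. Projectivity of T serves only to lift p along the epimorphism f.\<close>

locale preadditive_cat =
  fixes C :: "('o,'m) cat"
  assumes preadditive: "preadditive C"
begin

lemma category: "category C"
  using preadditive unfolding preadditive_def by (rule conjunct1)

lemma Ob_dom_cod: "f \<in> Ar C \<Longrightarrow> dom C f \<in> Ob C \<and> cod C f \<in> Ob C"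
  using category unfolding category_def by (elim conjE) blast

lemma cmp_hom: "f \<in> hom C X Y \<Longrightarrow> g \<in> hom C Y Z \<Longrightarrow> cmp C g f \<in> hom C X Z"
  using category unfolding category_def by (elim conjE) blast

lemma idt_hom: "X \<in> Ob C \<Longrightarrow> idt C X \<in> hom C X X"
  using category unfolding category_def by (elim conjE) blast

lemma cmp_assoc_hom: "f \<in> hom C W X \<Longrightarrow> g \<in> hom C X Y \<Longrightarrow> h \<in> hom C Y Z \<Longrightarrow>
    cmp C (cmp C h g) f = cmp C h (cmp C g f)"
  using category unfolding category_def by (elim conjE) metis

lemma cmp_idt_hom: "f \<in> hom C X Y \<Longrightarrow> cmp C (idt C Y) f = f \<and> cmp C f (idt C X) = f"
  using category unfolding category_def by (elim conjE) blast

lemma zer_hom: "X \<in> Ob C \<Longrightarrow> Y \<in> Ob C \<Longrightarrow> zer C X Y \<in> hom C X Y"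
  using preadditive unfolding preadditive_def by (elim conjE) blast

lemma add_group_hom: "f \<in> hom C X Y \<Longrightarrow> g \<in> hom C X Y \<Longrightarrow>
    add C f g \<in> hom C X Y \<and> neg C f \<in> hom C X Y \<and>
    add C f g = add C g f \<and> add C f (zer C X Y) = f \<and> add C f (neg C f) = zer C X Y"
  using preadditive unfolding preadditive_def by (elim conjE) blast

lemma add_assoc_hom: "f \<in> hom C X Y \<Longrightarrow> g \<in> hom C X Y \<Longrightarrow> h \<in> hom C X Y \<Longrightarrow>
    add C (add C f g) h = add C f (add C g h)"
  using preadditive unfolding preadditive_def by (elim conjE) blast

lemma distr_hom:
  "f \<in> hom C X Y \<Longrightarrow> g \<in> hom C Y Z \<Longrightarrow> g' \<in> hom C Y Z \<Longrightarrow>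
    cmp C (add C g g') f = add C (cmp C g f) (cmp C g' f)"
  "f \<in> hom C X Y \<Longrightarrow> f' \<in> hom C X Y \<Longrightarrow> h \<in> hom C Y Z \<Longrightarrow>
    cmp C h (add C f f') = add C (cmp C h f) (cmp C h f')"
  using preadditive unfolding preadditive_def by (elim conjE, blast)+

text \<open>From here on hom-membership is unfolded and the axioms are restated on arrows, so that
  the simplifier tracks domains and codomains.\<close>
lemma hom_iff [simp]: "f \<in> hom C X Y \<longleftrightarrow> f \<in> Ar C \<and> dom C f = X \<and> cod C f = Y"
  unfolding hom_def by blast

lemma dom_Ob [simp]: "f \<in> Ar C \<Longrightarrow> dom C f \<in> Ob C"
  and cod_Ob [simp]: "f \<in> Ar C \<Longrightarrow> cod C f \<in> Ob C"
  using Ob_dom_cod by blast+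

lemma cmp_Ar [simp]:
  "f \<in> Ar C \<Longrightarrow> g \<in> Ar C \<Longrightarrow> dom C g = cod C f \<Longrightarrow>
    cmp C g f \<in> Ar C \<and> dom C (cmp C g f) = dom C f \<and> cod C (cmp C g f) = cod C g"
  using cmp_hom[of f "dom C f" "cod C f" g "cod C g"] by simp

lemma idt_Ar [simp]: "X \<in> Ob C \<Longrightarrow> idt C X \<in> Ar C \<and> dom C (idt C X) = X \<and> cod C (idt C X) = X"
  using idt_hom by simp

lemma zer_Ar [simp]:
  "X \<in> Ob C \<Longrightarrow> Y \<in> Ob C \<Longrightarrow> zer C X Y \<in> Ar C \<and> dom C (zer C X Y) = X \<and> cod C (zer C X Y) = Y"
  using zer_hom by simp

lemma add_Ar [simp]:
  "f \<in> Ar C \<Longrightarrow> g \<in> Ar C \<Longrightarrow> dom C g = dom C f \<Longrightarrow> cod C g = cod C f \<Longrightarrow>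
    add C f g \<in> Ar C \<and> dom C (add C f g) = dom C f \<and> cod C (add C f g) = cod C f"
  using add_group_hom[of f "dom C f" "cod C f" g] unfolding hom_iff by blast

lemma neg_Ar [simp]: "f \<in> Ar C \<Longrightarrow> neg C f \<in> Ar C \<and> dom C (neg C f) = dom C f \<and> cod C (neg C f) = cod C f"
  using add_group_hom[of f "dom C f" "cod C f" f] by simp

lemma cmp_assoc [simp]:
  "f \<in> Ar C \<Longrightarrow> g \<in> Ar C \<Longrightarrow> h \<in> Ar C \<Longrightarrow> dom C g = cod C f \<Longrightarrow> dom C h = cod C g \<Longrightarrow>
    cmp C (cmp C h g) f = cmp C h (cmp C g f)"
  using cmp_assoc_hom[of f "dom C f" "cod C f" g "cod C g" h "cod C h"] by simp

lemma cmp_idt_left [simp]: "f \<in> Ar C \<Longrightarrow> cod C f = Y \<Longrightarrow> cmp C (idt C Y) f = f"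
  and cmp_idt_right [simp]: "f \<in> Ar C \<Longrightarrow> dom C f = X \<Longrightarrow> cmp C f (idt C X) = f"
  using cmp_idt_hom[of f "dom C f" "cod C f"] by auto

lemma add_comm:
  "f \<in> Ar C \<Longrightarrow> g \<in> Ar C \<Longrightarrow> dom C g = dom C f \<Longrightarrow> cod C g = cod C f \<Longrightarrow> add C f g = add C g f"
  using add_group_hom[of f "dom C f" "cod C f" g] by simp

lemma add_zer_right [simp]: "f \<in> Ar C \<Longrightarrow> dom C f = X \<Longrightarrow> cod C f = Y \<Longrightarrow> add C f (zer C X Y) = f"
  and add_neg_right [simp]: "f \<in> Ar C \<Longrightarrow> dom C f = X \<Longrightarrow> cod C f = Y \<Longrightarrow> add C f (neg C f) = zer C X Y"
  using add_group_hom[of f X Y f] by auto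

lemma add_assoc [simp]:
  "f \<in> Ar C \<Longrightarrow> g \<in> Ar C \<Longrightarrow> h \<in> Ar C \<Longrightarrow> dom C g = dom C f \<Longrightarrow> cod C g = cod C f \<Longrightarrow>
    dom C h = dom C f \<Longrightarrow> cod C h = cod C f \<Longrightarrow> add C (add C f g) h = add C f (add C g h)"
  using add_assoc_hom[of f "dom C f" "cod C f" g h] by simp

lemma distr_left [simp]:
  "f \<in> Ar C \<Longrightarrow> f' \<in> Ar C \<Longrightarrow> h \<in> Ar C \<Longrightarrow> dom C f' = dom C f \<Longrightarrow> cod C f' = cod C f \<Longrightarrow>
    dom C h = cod C f \<Longrightarrow> cmp C h (add C f f') = add C (cmp C h f) (cmp C h f')"
  using distr_hom(2)[of f "dom C f" "cod C f" f' h "cod C h"] by simp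

lemma distr_right [simp]:
  "f \<in> Ar C \<Longrightarrow> g \<in> Ar C \<Longrightarrow> g' \<in> Ar C \<Longrightarrow> dom C g' = dom C g \<Longrightarrow> cod C g' = cod C g \<Longrightarrow>
    dom C g = cod C f \<Longrightarrow> cmp C (add C g g') f = add C (cmp C g f) (cmp C g' f)"
  using distr_hom(1)[of f "dom C f" "cod C f" g "cod C g" g'] by simp

lemma add_zer_left [simp]: "f \<in> Ar C \<Longrightarrow> dom C f = X \<Longrightarrow> cod C f = Y \<Longrightarrow> add C (zer C X Y) f = f"
  by (metis add_comm add_zer_right cod_Ob dom_Ob zer_Ar)

lemma add_neg_left [simp]: "f \<in> Ar C \<Longrightarrow> dom C f = X \<Longrightarrow> cod C f = Y \<Longrightarrow> add C (neg C f) f = zer C X Y"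
  by (metis add_comm add_neg_right neg_Ar)

lemma add_left_comm:
  "f \<in> Ar C \<Longrightarrow> g \<in> Ar C \<Longrightarrow> h \<in> Ar C \<Longrightarrow> dom C g = dom C f \<Longrightarrow> cod C g = cod C f \<Longrightarrow>
    dom C h = dom C f \<Longrightarrow> cod C h = cod C f \<Longrightarrow> add C f (add C g h) = add C g (add C f h)"
  by (metis add_assoc add_comm)

lemma add_cancel_left:
  "f \<in> Ar C \<Longrightarrow> g \<in> Ar C \<Longrightarrow> h \<in> Ar C \<Longrightarrow> dom C g = dom C f \<Longrightarrow> cod C g = cod C f \<Longrightarrow>
    dom C h = dom C f \<Longrightarrow> cod C h = cod C f \<Longrightarrow> add C f g = add C f h \<Longrightarrow> g = h"
  by (metis add_assoc add_neg_left add_zer_left neg_Ar)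

lemma add_self_zero: "f \<in> Ar C \<Longrightarrow> add C f f = f \<Longrightarrow> f = zer C (dom C f) (cod C f)"
  by (metis add_cancel_left add_zer_right cod_Ob dom_Ob zer_Ar)

lemma cmp_zer_right [simp]:
  assumes "h \<in> Ar C" "dom C h = Y" "X \<in> Ob C"
  shows "cmp C h (zer C X Y) = zer C X (cod C h)"
proof -
  have "Y \<in> Ob C" using assms by auto
  have "add C (cmp C h (zer C X Y)) (cmp C h (zer C X Y)) = cmp C h (zer C X Y)"
    using assms by (metis add_zer_right distr_left dom_Ob zer_Ar)
  then show ?thesis using assms add_self_zero[of "cmp C h (zer C X Y)"] \<open>Y \<in> Ob C\<close> by simp
qed

lemma cmp_zer_left [simp]:
  assumes "f \<in> Ar C" "cod C f = Y" "Z \<in> Ob C"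
  shows "cmp C (zer C Y Z) f = zer C (dom C f) Z"
proof -
  have "Y \<in> Ob C" using assms by auto
  have "add C (cmp C (zer C Y Z) f) (cmp C (zer C Y Z) f) = cmp C (zer C Y Z) f"
    using assms by (metis add_zer_right distr_right cod_Ob zer_Ar)
  then show ?thesis using assms add_self_zero[of "cmp C (zer C Y Z) f"] \<open>Y \<in> Ob C\<close> by simp
qed

lemma neg_unique:
  "f \<in> Ar C \<Longrightarrow> g \<in> Ar C \<Longrightarrow> dom C g = dom C f \<Longrightarrow> cod C g = cod C f \<Longrightarrow>
    add C f g = zer C (dom C f) (cod C f) \<Longrightarrow> g = neg C f"
  by (metis add_cancel_left add_neg_right neg_Ar)

lemma cmp_neg_right [simp]:
  "f \<in> Ar C \<Longrightarrow> h \<in> Ar C \<Longrightarrow> dom C h = cod C f \<Longrightarrow> cmp C h (neg C f) = neg C (cmp C h f)"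
  by (rule neg_unique) (simp_all flip: distr_left)

lemma cmp_neg_left [simp]:
  "f \<in> Ar C \<Longrightarrow> h \<in> Ar C \<Longrightarrow> dom C h = cod C f \<Longrightarrow> cmp C (neg C h) f = neg C (cmp C h f)"
  by (rule neg_unique) (simp_all flip: distr_right)

lemma neg_neg [simp]: "f \<in> Ar C \<Longrightarrow> neg C (neg C f) = f"
  by (metis neg_unique add_neg_left neg_Ar)

lemma neg_add [simp]:
  "f \<in> Ar C \<Longrightarrow> g \<in> Ar C \<Longrightarrow> dom C g = dom C f \<Longrightarrow> cod C g = cod C f \<Longrightarrow>
    neg C (add C f g) = add C (neg C f) (neg C g)"
  by (rule neg_unique[symmetric]) (simp_all add: add_left_comm[of g "neg C f"])

lemma neg_zer [simp]: "X \<in> Ob C \<Longrightarrow> Y \<in> Ob C \<Longrightarrow> neg C (zer C X Y) = zer C X Y"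
  by (metis neg_unique add_zer_left zer_Ar)

lemma add_neg_cancel [simp]:
  "f \<in> Ar C \<Longrightarrow> g \<in> Ar C \<Longrightarrow> dom C g = dom C f \<Longrightarrow> cod C g = cod C f \<Longrightarrow>
    add C f (add C (neg C f) g) = g"
  "f \<in> Ar C \<Longrightarrow> g \<in> Ar C \<Longrightarrow> dom C g = dom C f \<Longrightarrow> cod C g = cod C f \<Longrightarrow>
    add C (neg C f) (add C f g) = g"
  by (simp_all flip: add_assoc)

text \<open>The simplifier right-associates composites, so a known equation g f = h is applied
  inside longer composites through this rule.\<close>
lemma cmp_assoc_subst:
  "f \<in> Ar C \<Longrightarrow> g \<in> Ar C \<Longrightarrow> x \<in> Ar C \<Longrightarrow> dom C g = cod C f \<Longrightarrow> cod C x = dom C f \<Longrightarrow>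
    cmp C g f = h \<Longrightarrow> cmp C g (cmp C f x) = cmp C h x"
  by (metis cmp_assoc)

lemma kernel_hom:
  "is_kernel C X Y f K k \<Longrightarrow> k \<in> hom C K X \<and> f \<in> hom C X Y \<and> cmp C f k = zer C K Y \<and> K \<in> Ob C"
  unfolding is_kernel_def by blast

lemma kernel_unique_lift:
  assumes "is_kernel C X Y f K k" "g \<in> hom C W X" "cmp C f g = zer C W Y"
  shows "\<exists>!h. h \<in> hom C W K \<and> cmp C k h = g"
proof -
  have "\<forall>W g. g \<in> hom C W X \<and> cmp C f g = zer C W Y \<longrightarrow> (\<exists>!h. h \<in> hom C W K \<and> cmp C k h = g)"
    using assms(1) unfolding is_kernel_def by (elim conjE) assumption
  then show ?thesis using assms(2,3) by blast
qed

lemma kernel_lift: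
  "is_kernel C X Y f K k \<Longrightarrow> g \<in> hom C W X \<Longrightarrow> cmp C f g = zer C W Y \<Longrightarrow>
    \<exists>h. h \<in> hom C W K \<and> cmp C k h = g"
  by (drule (2) kernel_unique_lift) blast

lemma kernel_cancel:
  assumes ker: "is_kernel C X Y f K k" and h: "h1 \<in> hom C W K" "h2 \<in> hom C W K"
    and eq: "cmp C k h1 = cmp C k h2"
  shows "h1 = h2"
proof -
  have k: "k \<in> hom C K X" "f \<in> hom C X Y" "cmp C f k = zer C K Y"
    using kernel_hom[OF ker] by blast+
  have "W \<in> Ob C" "Y \<in> Ob C" using k h by auto
  then have "cmp C f (cmp C k h1) = zer C W Y"
    using k h cmp_assoc_subst[of k f h1 "zer C K Y"] by simp
  with k h have "\<exists>!h. h \<in> hom C W K \<and> cmp C k h = cmp C k h1"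
    using kernel_unique_lift[OF ker, of "cmp C k h1" W] by simp
  then show ?thesis using h eq by (metis (no_types, lifting))
qed

lemma pullback_lift:
  assumes "is_pullback C X Y TY f p Z g q" "a \<in> hom C W X" "b \<in> hom C W TY" "cmp C f a = cmp C p b"
  shows "\<exists>h. h \<in> hom C W Z \<and> cmp C g h = a \<and> cmp C q h = b"
proof -
  have "\<forall>W a b. a \<in> hom C W X \<longrightarrow> b \<in> hom C W TY \<longrightarrow> cmp C f a = cmp C p b \<longrightarrow>
      (\<exists>!h. h \<in> hom C W Z \<and> cmp C g h = a \<and> cmp C q h = b)"
    using assms(1) unfolding is_pullback_def by (elim conjE) assumption
  then show ?thesis using assms(2-4) by (metis (no_types, lifting))
qed

lemma biproduct_hom:
  "is_biproduct C X Y B i1 i2 p1 p2 \<Longrightarrow> B \<in> Ob C \<and>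
     i1 \<in> hom C X B \<and> i2 \<in> hom C Y B \<and> p1 \<in> hom C B X \<and> p2 \<in> hom C B Y \<and>
     cmp C p1 i1 = idt C X \<and> cmp C p2 i2 = idt C Y \<and>
     cmp C p1 i2 = zer C Y X \<and> cmp C p2 i1 = zer C X Y"
  unfolding is_biproduct_def by blast

lemma biproduct_proj_pair:
  assumes B: "is_biproduct C X Y B i1 i2 p1 p2" and x: "x \<in> hom C W X" and y: "y \<in> hom C W Y"
  shows "cmp C p1 (add C (cmp C i1 x) (cmp C i2 y)) = x"
    and "cmp C p2 (add C (cmp C i1 x) (cmp C i2 y)) = y"
proof -
  have Bh: "i1 \<in> hom C X B" "i2 \<in> hom C Y B" "p1 \<in> hom C B X" "p2 \<in> hom C B Y"
     "cmp C p1 i1 = idt C X" "cmp C p2 i2 = idt C Y"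
     "cmp C p1 i2 = zer C Y X" "cmp C p2 i1 = zer C X Y"
    using biproduct_hom[OF B] by blast+
  have "W \<in> Ob C" "X \<in> Ob C" "Y \<in> Ob C" using x y by auto
  then show "cmp C p1 (add C (cmp C i1 x) (cmp C i2 y)) = x"
    and "cmp C p2 (add C (cmp C i1 x) (cmp C i2 y)) = y"
    using Bh x y cmp_assoc_subst[of i1 p1 x] cmp_assoc_subst[of i2 p2 y]
      cmp_assoc_subst[of i2 p1 y] cmp_assoc_subst[of i1 p2 x] by simp_all
qed

lemma biproduct_ext:
  assumes B: "is_biproduct C X Y B i1 i2 p1 p2" and h: "h \<in> hom C W B" "h' \<in> hom C W B"
    and "cmp C p1 h = cmp C p1 h'" "cmp C p2 h = cmp C p2 h'"
  shows "h = h'"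
proof -
  have Bh: "i1 \<in> hom C X B" "i2 \<in> hom C Y B" "p1 \<in> hom C B X" "p2 \<in> hom C B Y"
     "add C (cmp C i1 p1) (cmp C i2 p2) = idt C B"
    using B unfolding is_biproduct_def by blast+
  have "x = add C (cmp C i1 (cmp C p1 x)) (cmp C i2 (cmp C p2 x))" if "x \<in> hom C W B" for x
  proof -
    have "x = cmp C (add C (cmp C i1 p1) (cmp C i2 p2)) x" using Bh(5) that by simp
    then show ?thesis using Bh(1-4) that by simp
  qed
  then show ?thesis using h assms(4,5) by metis
qed

lemma biproduct_pullback_unique_lift:
  assumes ker: "is_kernel C X Y f K k" and a: "a \<in> hom C TY X" "cmp C f a = p"
    and B: "is_biproduct C K TY B i1 i2 p1 p2"
    and ab: "\<alpha> \<in> hom C W X" "\<beta> \<in> hom C W TY" "cmp C f \<alpha> = cmp C p \<beta>"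
  shows "\<exists>!h. h \<in> hom C W B \<and> cmp C (add C (cmp C k p1) (cmp C a p2)) h = \<alpha> \<and> cmp C p2 h = \<beta>"
proof -
  let ?g = "add C (cmp C k p1) (cmp C a p2)"
  have kh: "k \<in> hom C K X" "f \<in> hom C X Y" using kernel_hom[OF ker] by blast+
  have Bh: "i1 \<in> hom C K B" "i2 \<in> hom C TY B" "p1 \<in> hom C B K" "p2 \<in> hom C B TY"
    using biproduct_hom[OF B] by blast+
  have g_cmp: "cmp C ?g x = add C (cmp C k (cmp C p1 x)) (cmp C a (cmp C p2 x))" if "x \<in> hom C W B" for x
    using that kh a Bh by simp
  have "W \<in> Ob C" "Y \<in> Ob C" "p \<in> hom C TY Y" using ab kh a cmp_hom by auto
  then have "cmp C f (add C \<alpha> (neg C (cmp C a \<beta>))) = zer C W Y"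
    using cmp_assoc_subst[of a f \<beta> p] ab kh a by simp
  moreover have "add C \<alpha> (neg C (cmp C a \<beta>)) \<in> hom C W X" using ab a by simp
  ultimately obtain \<gamma> where \<gamma>: "\<gamma> \<in> hom C W K" "cmp C k \<gamma> = add C \<alpha> (neg C (cmp C a \<beta>))"
    using kernel_lift[OF ker] by blast
  let ?h = "add C (cmp C i1 \<gamma>) (cmp C i2 \<beta>)"
  have p_h: "cmp C p1 ?h = \<gamma>" "cmp C p2 ?h = \<beta>"
    using biproduct_proj_pair[OF B \<gamma>(1) ab(2)] by blast+
  have h: "?h \<in> hom C W B" using \<gamma> ab Bh by simp
  have "cmp C ?g ?h = \<alpha>" using g_cmp[OF h] p_h \<gamma> ab a kh by simp
  moreover have "h' = ?h" if h': "h' \<in> hom C W B" "cmp C ?g h' = \<alpha>" "cmp C p2 h' = \<beta>" for h'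
  proof (rule biproduct_ext[OF B h'(1) h])
    have "cmp C k (cmp C p1 h') = cmp C k \<gamma>"
      using g_cmp[OF h'(1)] h' \<gamma> ab a kh Bh by simp
    then show "cmp C p1 h' = cmp C p1 ?h"
      using kernel_cancel[OF ker] h'(1) Bh \<gamma>(1) p_h by simp
    show "cmp C p2 h' = cmp C p2 ?h" using h'(3) p_h by simp
  qed
  ultimately show ?thesis using h p_h by metis
qed

lemma biproduct_is_pullback:
  assumes ker: "is_kernel C X Y f K k" and a: "a \<in> hom C TY X" "cmp C f a = p"
    and B: "is_biproduct C K TY B i1 i2 p1 p2"
  shows "is_pullback C X Y TY f p B (add C (cmp C k p1) (cmp C a p2)) p2"
proof -
  have kh: "k \<in> hom C K X" "f \<in> hom C X Y" "cmp C f k = zer C K Y"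
    using kernel_hom[OF ker] by blast+
  have Bh: "B \<in> Ob C" "p1 \<in> hom C B K" "p2 \<in> hom C B TY"
    using biproduct_hom[OF B] by blast+
  have "Y \<in> Ob C" "p \<in> hom C TY Y" using a kh cmp_hom by auto
  then have "cmp C f (add C (cmp C k p1) (cmp C a p2)) = cmp C p p2"
    using cmp_assoc_subst[of k f p1] cmp_assoc_subst[of a f p2 p] Bh kh a by simp
  then show ?thesis
    unfolding is_pullback_def using biproduct_pullback_unique_lift[OF ker a B] kh a Bh
      \<open>p \<in> hom C TY Y\<close> by simp
qed

end

locale stable_cat = preadditive_cat C for C :: "('o,'m) cat" +
  fixes T :: "'o set"
  assumes additive: "additive C" and closed: "closed_additive_subcat C T"
begin

definition T_null :: "'o \<Rightarrow> 'o \<Rightarrow> 'm \<Rightarrow> bool" where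
  "T_null A B x \<longleftrightarrow> x \<in> hom C A B \<and> (\<exists>W\<in>T. \<exists>u\<in>hom C A W. \<exists>v\<in>hom C W B. x = cmp C v u)"

lemma T_Ob: "W \<in> T \<Longrightarrow> W \<in> Ob C"
  using closed unfolding closed_additive_subcat_def by blast

lemma zero_obj_ex: "\<exists>Z. zero_obj C Z \<and> Z \<in> T \<and> Z \<in> Ob C"
proof -
  obtain Z where "zero_obj C Z" using additive unfolding additive_def by blast
  then show ?thesis using closed unfolding closed_additive_subcat_def zero_obj_def by blast
qed

lemma biproduct_ex: "X \<in> Ob C \<Longrightarrow> Y \<in> Ob C \<Longrightarrow> \<exists>B i1 i2 p1 p2. is_biproduct C X Y B i1 i2 p1 p2"
  using additive unfolding additive_def by blast

lemma biproduct_in_T_iff: "is_biproduct C X Y B i1 i2 p1 p2 \<Longrightarrow> B \<in> T \<longleftrightarrow> X \<in> T \<and> Y \<in> T"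
  using closed unfolding closed_additive_subcat_def by blast

lemma T_nullI:
  "W \<in> T \<Longrightarrow> u \<in> hom C A W \<Longrightarrow> v \<in> hom C W B \<Longrightarrow> x = cmp C v u \<Longrightarrow> T_null A B x"
  unfolding T_null_def using cmp_hom by blast

lemma T_nullE:
  assumes "T_null A B x"
  obtains W u v where "W \<in> T" "u \<in> hom C A W" "v \<in> hom C W B" "x = cmp C v u"
  using assms unfolding T_null_def by blast

lemma T_null_zer:
  assumes "A \<in> Ob C" "B \<in> Ob C"
  shows "T_null A B (zer C A B)"
proof -
  obtain Z where "Z \<in> T" "Z \<in> Ob C" using zero_obj_ex by blast
  with assms show ?thesis by (intro T_nullI[of Z "zer C A Z" A "zer C Z B"]) simp_all
qed

lemma T_null_cmp_left:
  assumes "T_null A B x" "h \<in> hom C B D"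
  shows "T_null A D (cmp C h x)"
proof -
  obtain W u v where "W \<in> T" "u \<in> hom C A W" "v \<in> hom C W B" "x = cmp C v u"
    using assms(1) by (rule T_nullE)
  with assms(2) show ?thesis by (intro T_nullI[of W u A "cmp C h v"]) simp_all
qed

lemma T_null_cmp_right:
  assumes "T_null A B x" "h \<in> hom C D A"
  shows "T_null D B (cmp C x h)"
proof -
  obtain W u v where "W \<in> T" "u \<in> hom C A W" "v \<in> hom C W B" "x = cmp C v u"
    using assms(1) by (rule T_nullE)
  with assms(2) show ?thesis by (intro T_nullI[of W "cmp C u h" D v]) simp_all
qed

lemma T_null_neg:
  assumes "T_null A B x"
  shows "T_null A B (neg C x)"
proof -
  obtain W u v where "W \<in> T" "u \<in> hom C A W" "v \<in> hom C W B" "x = cmp C v u"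
    using assms by (rule T_nullE)
  then show ?thesis by (intro T_nullI[of W u A "neg C v"]) simp_all
qed

lemma T_null_if_dom_in_T: "A \<in> T \<Longrightarrow> x \<in> hom C A B \<Longrightarrow> T_null A B x"
  using T_Ob by (intro T_nullI[of A "idt C A" _ x]) auto

lemma T_null_if_cod_in_T: "B \<in> T \<Longrightarrow> x \<in> hom C A B \<Longrightarrow> T_null A B x"
  using T_Ob by (intro T_nullI[of B x _ "idt C B"]) auto

lemma T_null_add:
  assumes "T_null A B x" "T_null A B y"
  shows "T_null A B (add C x y)"
proof -
  obtain W1 u1 v1 where W1: "W1 \<in> T" "u1 \<in> hom C A W1" "v1 \<in> hom C W1 B" "x = cmp C v1 u1"
    using assms(1) by (rule T_nullE)
  obtain W2 u2 v2 where W2: "W2 \<in> T" "u2 \<in> hom C A W2" "v2 \<in> hom C W2 B" "y = cmp C v2 u2"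
    using assms(2) by (rule T_nullE)
  have Ob: "W1 \<in> Ob C" "W2 \<in> Ob C" "A \<in> Ob C" "B \<in> Ob C" using W1 W2 T_Ob by auto
  then obtain D i1 i2 p1 p2 where D: "is_biproduct C W1 W2 D i1 i2 p1 p2"
    using biproduct_ex by blast
  have "D \<in> T" using D W1 W2 biproduct_in_T_iff by blast
  have Dh: "i1 \<in> hom C W1 D" "i2 \<in> hom C W2 D" "p1 \<in> hom C D W1" "p2 \<in> hom C D W2"
     "cmp C p1 i1 = idt C W1" "cmp C p2 i2 = idt C W2"
     "cmp C p1 i2 = zer C W2 W1" "cmp C p2 i1 = zer C W1 W2"
    using D unfolding is_biproduct_def by blast+
  let ?u = "add C (cmp C i1 u1) (cmp C i2 u2)"
  let ?v = "add C (cmp C v1 p1) (cmp C v2 p2)"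
  have "cmp C ?v ?u = add C x y"
    using W1 W2 Dh Ob cmp_assoc_subst[of i1 p1 u1] cmp_assoc_subst[of i2 p2 u2]
      cmp_assoc_subst[of i2 p1 u2] cmp_assoc_subst[of i1 p2 u1] by simp
  then show ?thesis using \<open>D \<in> T\<close> W1 W2 Dh by (intro T_nullI[of D ?u _ ?v]) simp_all
qed

lemma precover_hom: "T_precover C T Y TY p \<Longrightarrow> TY \<in> T \<and> p \<in> hom C TY Y"
  unfolding T_precover_def by blast

lemma T_precover_lift:
  assumes "T_precover C T Y TY p" "T_null W Y x"
  shows "\<exists>y\<in>hom C W TY. x = cmp C p y"
proof -
  obtain V u v where V: "V \<in> T" "u \<in> hom C W V" "v \<in> hom C V Y" "x = cmp C v u"
    using assms(2) by (rule T_nullE)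
  have p: "p \<in> hom C TY Y" "\<forall>W t. W \<in> T \<longrightarrow> t \<in> hom C W Y \<longrightarrow> (\<exists>u\<in>hom C W TY. cmp C p u = t)"
    using assms(1) unfolding T_precover_def by blast+
  obtain v' where v': "v' \<in> hom C V TY" "cmp C p v' = v" using p V by blast
  have "x = cmp C p (cmp C v' u)" using V v' p cmp_assoc_subst[of v' p u v] by simp
  then show ?thesis using V v' by (intro bexI[of _ "cmp C v' u"]) simp_all
qed

lemma stable_eq_iff_T_null:
  "stable_eq C T X Y f g \<longleftrightarrow> f \<in> hom C X Y \<and> g \<in> hom C X Y \<and> T_null X Y (add C f (neg C g))"
  unfolding stable_eq_def T_null_def by auto

lemma stable_eq_refl: "x \<in> hom C A B \<Longrightarrow> stable_eq C T A B x x"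
  unfolding stable_eq_iff_T_null using T_null_zer[of A B] by auto

lemma stable_eq_sym:
  assumes "stable_eq C T A B x y"
  shows "stable_eq C T A B y x"
proof -
  have "T_null A B (neg C (add C x (neg C y)))"
    using assms T_null_neg unfolding stable_eq_iff_T_null by blast
  then show ?thesis using assms unfolding stable_eq_iff_T_null by (simp add: add_comm)
qed

lemma stable_eq_trans [trans]:
  assumes "stable_eq C T A B x y" "stable_eq C T A B y z"
  shows "stable_eq C T A B x z"
proof -
  have "T_null A B (add C (add C x (neg C y)) (add C y (neg C z)))"
    using assms T_null_add unfolding stable_eq_iff_T_null by blast
  then show ?thesis using assms unfolding stable_eq_iff_T_null by simp
qed

lemma stable_eq_cmp_left:
  assumes "stable_eq C T A B x y" "h \<in> hom C B D"
  shows "stable_eq C T A D (cmp C h x) (cmp C h y)"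
proof -
  have "T_null A D (cmp C h (add C x (neg C y)))"
    using assms T_null_cmp_left unfolding stable_eq_iff_T_null by blast
  then show ?thesis using assms unfolding stable_eq_iff_T_null by simp
qed

lemma stable_eq_cmp_right:
  assumes "stable_eq C T A B x y" "h \<in> hom C D A"
  shows "stable_eq C T D B (cmp C x h) (cmp C y h)"
proof -
  have "T_null D B (cmp C (add C x (neg C y)) h)"
    using assms T_null_cmp_right unfolding stable_eq_iff_T_null by blast
  then show ?thesis using assms unfolding stable_eq_iff_T_null by simp
qed

lemma stable_eq_T_null:
  assumes "stable_eq C T A B x y" "T_null A B y"
  shows "T_null A B x"
proof -
  have "T_null A B (add C (add C x (neg C y)) y)"
    using assms T_null_add unfolding stable_eq_iff_T_null by blast
  then show ?thesis using assms unfolding stable_eq_iff_T_null by simp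
qed

lemma stable_eq_if_T:
  "x \<in> hom C A B \<Longrightarrow> y \<in> hom C A B \<Longrightarrow> A \<in> T \<or> B \<in> T \<Longrightarrow> stable_eq C T A B x y"
  unfolding stable_eq_iff_T_null using T_null_if_dom_in_T T_null_if_cod_in_T
  by (metis add_Ar hom_iff neg_Ar)

lemma stable_eq_square_inverse:
  assumes sq: "stable_eq C T X Y0 (cmp C f0 \<phi>3) (cmp C \<phi>4 f)"
    and f: "f \<in> hom C X Y" and h: "f0 \<in> hom C X0 Y0" "\<phi>3 \<in> hom C X X0" "\<phi>4 \<in> hom C Y Y0"
    and \<psi>3: "\<psi>3 \<in> hom C X0 X" "stable_eq C T X0 X0 (cmp C \<phi>3 \<psi>3) (idt C X0)"
    and \<psi>4: "\<psi>4 \<in> hom C Y0 Y" "stable_eq C T Y Y (cmp C \<psi>4 \<phi>4) (idt C Y)"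
  shows "stable_eq C T X0 Y (cmp C f \<psi>3) (cmp C \<psi>4 f0)"
proof -
  have "stable_eq C T X0 Y (cmp C (cmp C \<psi>4 \<phi>4) (cmp C f \<psi>3)) (cmp C (idt C Y) (cmp C f \<psi>3))"
    using stable_eq_cmp_right[OF \<psi>4(2), of "cmp C f \<psi>3" X0] f \<psi>3 by simp
  then have "stable_eq C T X0 Y (cmp C f \<psi>3) (cmp C \<psi>4 (cmp C \<phi>4 (cmp C f \<psi>3)))"
    using stable_eq_sym f \<psi>3 h \<psi>4 by simp
  also have "stable_eq C T X0 Y \<dots> (cmp C \<psi>4 (cmp C f0 (cmp C \<phi>3 \<psi>3)))"
    using stable_eq_cmp_left[OF stable_eq_cmp_right[OF stable_eq_sym[OF sq] \<psi>3(1)] \<psi>4(1)]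
      f \<psi>3 h \<psi>4 by simp
  also have "stable_eq C T X0 Y \<dots> (cmp C \<psi>4 f0)"
    using stable_eq_cmp_left[OF \<psi>3(2), of "cmp C \<psi>4 f0" Y] \<psi>3 h \<psi>4 by simp
  finally show ?thesis .
qed

lemma T_null_if_T_null_cmp_pullback:
  assumes pb: "is_pullback C X0 Y0 T0 f0 p0 Z0 g0 q0" and pc: "T_precover C T Y0 T0 p0"
    and "Z0 \<in> T" and x: "x \<in> hom C W X0" and "T_null W Y0 (cmp C f0 x)"
  shows "T_null W X0 x"
proof -
  obtain b where "b \<in> hom C W T0" "cmp C f0 x = cmp C p0 b"
    using T_precover_lift[OF pc] \<open>T_null W Y0 (cmp C f0 x)\<close> by blast
  then obtain \<beta> where \<beta>: "\<beta> \<in> hom C W Z0" "cmp C g0 \<beta> = x"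
    using pullback_lift[OF pb x] by blast
  have "g0 \<in> hom C Z0 X0" using pb unfolding is_pullback_def by blast
  then show ?thesis
    using T_null_cmp_left[OF T_null_if_cod_in_T[OF \<open>Z0 \<in> T\<close> \<beta>(1)]] \<beta>(2) by blast
qed

text \<open>The strict lift is e' - a r, where f e' - h = p r.\<close>
lemma strict_lift_if_stable_lift:
  assumes pc: "T_precover C T Y TY p" and a: "a \<in> hom C TY X" "cmp C f a = p"
    and f: "f \<in> hom C X Y" and e': "e' \<in> hom C W X" and "stable_eq C T W Y (cmp C f e') h"
  shows "\<exists>e\<in>hom C W X. cmp C f e = h"
proof -
  have h: "h \<in> hom C W Y" using \<open>stable_eq C T W Y (cmp C f e') h\<close> unfolding stable_eq_def by blast
  obtain r where r: "r \<in> hom C W TY" "add C (cmp C f e') (neg C h) = cmp C p r"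
    using T_precover_lift[OF pc] \<open>stable_eq C T W Y (cmp C f e') h\<close>
    unfolding stable_eq_iff_T_null by blast
  have p: "p \<in> hom C TY Y" using precover_hom[OF pc] by blast
  have "cmp C f (cmp C a r) = cmp C p r" using cmp_assoc_subst[of a f r p] a f r by simp
  then have "cmp C f (add C e' (neg C (cmp C a r))) = add C (cmp C f e') (neg C (cmp C p r))"
    using a f r e' by simp
  also have "\<dots> = h" using f e' h by (simp flip: r(2))
  finally show ?thesis using e' a r by (intro bexI[of _ "add C e' (neg C (cmp C a r))"]) simp_all
qed

text \<open>Lifting h - id = V U along the precover as p V' U, the map id - t + V' U p is killed
  by p, and V' U p vanishes on K.\<close>
lemma precover_endo_on_kernel:
  assumes pc: "T_precover C T Y TY p" and ker: "is_kernel C TY Y p K k"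
    and h: "h \<in> hom C Y Y" "stable_eq C T Y Y h (idt C Y)"
    and t: "t \<in> hom C TY TY" "cmp C p t = cmp C h p"
  shows "\<exists>\<chi>\<in>hom C TY K. cmp C k (cmp C \<chi> k) = add C k (neg C (cmp C t k))"
proof -
  have p: "TY \<in> T" "p \<in> hom C TY Y" using precover_hom[OF pc] by blast+
  have k: "k \<in> hom C K TY" "cmp C p k = zer C K Y" "K \<in> Ob C" using kernel_hom[OF ker] by blast+
  have Ob: "Y \<in> Ob C" "TY \<in> Ob C" using p by auto
  obtain W U V where W: "W \<in> T" "U \<in> hom C Y W" "V \<in> hom C W Y"
      and VU: "add C h (neg C (idt C Y)) = cmp C V U"
    using h unfolding stable_eq_iff_T_null by (blast elim: T_nullE)
  obtain V' where V': "V' \<in> hom C W TY" "V = cmp C p V'"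
    using T_precover_lift[OF pc T_null_if_dom_in_T[OF W(1,3)]] by blast
  define z where "z = cmp C V' (cmp C U p)"
  have "cmp C p z = cmp C (cmp C V U) p"
    unfolding z_def using V' W p by simp
  then have pz: "cmp C p z = add C (cmp C h p) (neg C p)"
    using VU[symmetric] h p Ob by simp
  let ?d = "add C (add C (idt C TY) (neg C t)) z"
  have "?d \<in> hom C TY TY" using t p V' W Ob unfolding z_def by simp
  moreover have "cmp C p ?d = zer C TY Y"
    using pz t p h V' W Ob unfolding z_def by simp
  ultimately obtain \<chi> where \<chi>: "\<chi> \<in> hom C TY K" "cmp C k \<chi> = ?d"
    using kernel_lift[OF ker] by blast
  have "cmp C z k = zer C K TY" unfolding z_def using k V' W p Ob by simp
  then have "cmp C k (cmp C \<chi> k) = add C k (neg C (cmp C t k))"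
    using cmp_assoc_subst[of \<chi> k k] \<chi> k t V' W p Ob unfolding z_def by simp
  then show ?thesis using \<chi>(1) by blast
qed

lemma std_left_triangle_hom:
  assumes "std_left_triangle C T K Z X Y w g f"
  shows "w \<in> hom C K Z" "g \<in> hom C Z X" "f \<in> hom C X Y"
  using assms unfolding std_left_triangle_def is_pullback_def by blast+

text \<open>In a left triangle K \<rightarrow> 0 \<rightarrow> X \<rightarrow> Y the map f is a monomorphism of the stable
  category: f0 \<phi>3 x is T-null, so \<phi>3 x lifts through the pullback Z0 \<in> T.\<close>
lemma T_null_if_annihilated:
  assumes std: "std_left_triangle C T K0 Z0 X0 Y0 w0 g0 f0" and "Z0 \<in> T"
    and \<phi>3: "\<phi>3 \<in> hom C X X0" and \<psi>3: "\<psi>3 \<in> hom C X0 X" "stable_eq C T X X (cmp C \<psi>3 \<phi>3) (idt C X)"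
    and \<phi>4: "\<phi>4 \<in> hom C Y Y0" and sq: "stable_eq C T X Y0 (cmp C f0 \<phi>3) (cmp C \<phi>4 f)"
    and f: "f \<in> hom C X Y" and x: "x \<in> hom C W X" "cmp C f x = zer C W Y"
  shows "T_null W X x"
proof -
  obtain T0 p0 k0 q0 where pc0: "T_precover C T Y0 T0 p0"
    and pb: "is_pullback C X0 Y0 T0 f0 p0 Z0 g0 q0"
    using std unfolding std_left_triangle_def by blast
  have f0: "f0 \<in> hom C X0 Y0" using std_left_triangle_hom[OF std] by blast
  have Ob: "W \<in> Ob C" "Y0 \<in> Ob C" using x f0 by auto
  have "stable_eq C T W Y0 (cmp C (cmp C f0 \<phi>3) x) (cmp C (cmp C \<phi>4 f) x)"
    using stable_eq_cmp_right[OF sq x(1)] .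
  then have "stable_eq C T W Y0 (cmp C f0 (cmp C \<phi>3 x)) (zer C W Y0)"
    using f0 \<phi>3 \<phi>4 f x Ob by simp
  then have "T_null W Y0 (cmp C f0 (cmp C \<phi>3 x))" using stable_eq_T_null T_null_zer Ob by blast
  moreover have "cmp C \<phi>3 x \<in> hom C W X0" using \<phi>3 x by simp
  ultimately have "T_null W X0 (cmp C \<phi>3 x)"
    using T_null_if_T_null_cmp_pullback[OF pb pc0 \<open>Z0 \<in> T\<close>] by blast
  then have "T_null W X (cmp C \<psi>3 (cmp C \<phi>3 x))" using T_null_cmp_left \<psi>3(1) by blast
  moreover have "stable_eq C T W X (cmp C (cmp C \<psi>3 \<phi>3) x) (cmp C (idt C X) x)"
    using stable_eq_cmp_right[OF \<psi>3(2) x(1)] .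
  then have "stable_eq C T W X x (cmp C \<psi>3 (cmp C \<phi>3 x))"
    using stable_eq_sym \<phi>3 \<psi>3(1) x by simp
  ultimately show ?thesis using stable_eq_T_null by blast
qed

lemma stable_iso_idt: "X \<in> Ob C \<Longrightarrow> stable_iso C T X X (idt C X)"
  unfolding stable_iso_def using stable_eq_refl[of "idt C X" X X] by auto

lemma stable_iso_zer_if_in_T: "A \<in> T \<Longrightarrow> B \<in> T \<Longrightarrow> stable_iso C T A B (zer C A B)"
  unfolding stable_iso_def using T_Ob
  by (intro conjI bexI[of _ "zer C B A"] stable_eq_if_T) auto

lemma left_triangle_if_std_middle_in_T:
  assumes std: "std_left_triangle C T K Z X Y w g f" and "Z \<in> T" and Z0: "zero_obj C Z0"
  shows "left_triangle C T K Z0 X Y (zer C K Z0) (zer C Z0 X) f"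
proof -
  have h: "w \<in> hom C K Z" "g \<in> hom C Z X" "f \<in> hom C X Y"
    using std_left_triangle_hom[OF std] by blast+
  have "Z0 \<in> T" using Z0 closed unfolding closed_additive_subcat_def by blast
  then have Ob: "Z0 \<in> Ob C" "Z \<in> Ob C" "K \<in> Ob C" "X \<in> Ob C" "Y \<in> Ob C"
    using T_Ob h by auto
  have sq1: "stable_eq C T K Z (cmp C w (idt C K)) (cmp C (zer C Z0 Z) (zer C K Z0))"
    using \<open>Z \<in> T\<close> h Ob by (intro stable_eq_if_T) simp_all
  have sq2: "stable_eq C T Z0 X (cmp C g (zer C Z0 Z)) (cmp C (idt C X) (zer C Z0 X))"
    using \<open>Z0 \<in> T\<close> h Ob by (intro stable_eq_if_T) simp_all
  have sq3: "stable_eq C T X Y (cmp C f (idt C X)) (cmp C (idt C Y) f)"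
    using stable_eq_refl[OF h(3)] h by simp
  have "stable_iso C T Z0 Z (zer C Z0 Z)"
    using stable_iso_zer_if_in_T \<open>Z \<in> T\<close> \<open>Z0 \<in> T\<close> by blast
  moreover have "stable_iso C T K K (idt C K)" "stable_iso C T X X (idt C X)" "stable_iso C T Y Y (idt C Y)"
    using stable_iso_idt Ob by blast+
  moreover have "zer C K Z0 \<in> hom C K Z0" "zer C Z0 X \<in> hom C Z0 X" using Ob by simp_all
  ultimately show ?thesis
    unfolding left_triangle_def using std sq1 sq2 sq3 h by blast
qed

end

locale abelian_stable_cat = stable_cat +
  assumes abelian: "abelian C"
begin

lemma kernel_ex: "f \<in> hom C X Y \<Longrightarrow> \<exists>K k. is_kernel C X Y f K k"
  using abelian unfolding abelian_def by blast

text \<open>A retraction v of u : A \<rightarrow> W splits W as A \<oplus> ker v, so closure of T under summands applies.\<close>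
lemma in_T_if_idt_T_null:
  assumes null: "T_null A A (idt C A)" and A: "A \<in> Ob C"
  shows "A \<in> T"
proof -
  obtain W u v where W: "W \<in> T" "u \<in> hom C A W" "v \<in> hom C W A" and "idt C A = cmp C v u"
    using null by (rule T_nullE)
  then have vu_id: "cmp C v u = idt C A" by simp
  have WO: "W \<in> Ob C" using W T_Ob by blast
  obtain K k where ker: "is_kernel C W A v K k" using kernel_ex W by blast
  have kh: "k \<in> hom C K W" "cmp C v k = zer C K A" "K \<in> Ob C" using kernel_hom[OF ker] by blast+
  define e where "e = add C (idt C W) (neg C (cmp C u v))"
  have eh: "e \<in> hom C W W" unfolding e_def using W WO by simp
  have vu: "cmp C v (cmp C u x) = x" if "x \<in> hom C X0 A" for x X0
    using cmp_assoc_subst[of u v x "idt C A"] W vu_id that A by simp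
  have ve: "cmp C v e = zer C W A" unfolding e_def using W WO A vu[of v] by simp
  obtain r where r: "r \<in> hom C W K" "cmp C k r = e" using kernel_lift[OF ker eh ve] by blast
  have kr: "cmp C k (cmp C r x) = cmp C e x" if "x \<in> hom C X0 W" for x X0
    using cmp_assoc_subst[of r k x e] r kh that by simp
  have vk: "cmp C v (cmp C k x) = zer C X0 A" if "x \<in> hom C X0 K" for x X0
    using cmp_assoc_subst[of k v x "zer C K A"] kh W that A by simp
  have rk: "cmp C r k = idt C K"
  proof (rule kernel_cancel[OF ker])
    show "cmp C r k \<in> hom C K K" "idt C K \<in> hom C K K" using r kh by simp_all
    have "cmp C k (cmp C r k) = cmp C e k" using kr[of k] kh by simp
    also have "\<dots> = k" unfolding e_def using kh W WO vk[of "idt C K"] A by simp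
    finally show "cmp C k (cmp C r k) = cmp C k (idt C K)" using kh by simp
  qed
  have ru: "cmp C r u = zer C A K"
  proof (rule kernel_cancel[OF ker])
    show "cmp C r u \<in> hom C A K" "zer C A K \<in> hom C A K" using r kh W A by simp_all
    have "cmp C k (cmp C r u) = cmp C e u" using kr[of u] W by simp
    also have "\<dots> = zer C A W" unfolding e_def using W WO vu[of "idt C A"] A
      by (simp add: vu_id)
    finally show "cmp C k (cmp C r u) = cmp C k (zer C A K)" using kh A W by simp
  qed
  have "add C (cmp C u v) (cmp C k r) = idt C W"
    using r W WO unfolding e_def by (simp add: add_comm add_left_comm)
  then have "is_biproduct C A K W u k v r"
    unfolding is_biproduct_def using W vu_id WO kh r rk ru A by simp
  then show ?thesis using biproduct_in_T_iff W by blast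
qed

lemma in_T_if_stable_iso_from_T:
  assumes "A \<in> T" "stable_iso C T A B \<phi>"
  shows "B \<in> T"
proof -
  obtain b where \<phi>: "\<phi> \<in> hom C A B" and b: "b \<in> hom C B A" "stable_eq C T B B (cmp C \<phi> b) (idt C B)"
    using assms(2) unfolding stable_iso_def by blast
  have "T_null B B (cmp C \<phi> b)"
    using T_null_cmp_left[OF T_null_if_cod_in_T[OF assms(1) b(1)] \<phi>] .
  then have "T_null B B (idt C B)" using stable_eq_T_null[OF stable_eq_sym[OF b(2)]] by blast
  then show ?thesis using in_T_if_idt_T_null b(1) by auto
qed

lemma strong_monoE:
  assumes "strong_mono C T X Y f"
  obtains TY p K1 k1 K0 Z0 X0 Y0 w0 g0 f0 \<phi>3 \<psi>3 \<phi>4 \<psi>4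
  where "T_precover C T Y TY p" "is_kernel C TY Y p K1 k1"
    and "std_left_triangle C T K0 Z0 X0 Y0 w0 g0 f0" "Z0 \<in> T"
    and "\<phi>3 \<in> hom C X X0" "\<psi>3 \<in> hom C X0 X"
      "stable_eq C T X X (cmp C \<psi>3 \<phi>3) (idt C X)" "stable_eq C T X0 X0 (cmp C \<phi>3 \<psi>3) (idt C X0)"
    and "\<phi>4 \<in> hom C Y Y0" "\<psi>4 \<in> hom C Y0 Y" "stable_eq C T Y Y (cmp C \<psi>4 \<phi>4) (idt C Y)"
    and "stable_eq C T X Y0 (cmp C f0 \<phi>3) (cmp C \<phi>4 f)"
proof -
  obtain TY p K1 k1 Z where "T_precover C T Y TY p" "is_kernel C TY Y p K1 k1"
    and "zero_obj C Z" and "left_triangle C T K1 Z X Y (zer C K1 Z) (zer C Z X) f"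
    using assms unfolding strong_mono_def by blast
  moreover from this obtain K0 Z0 X0 Y0 w0 g0 f0 \<phi>2 \<phi>3 \<phi>4
    where "std_left_triangle C T K0 Z0 X0 Y0 w0 g0 f0"
      and "stable_iso C T Z Z0 \<phi>2" "stable_iso C T X X0 \<phi>3" "stable_iso C T Y Y0 \<phi>4"
      and "stable_eq C T X Y0 (cmp C f0 \<phi>3) (cmp C \<phi>4 f)"
    unfolding left_triangle_def by blast
  moreover have "Z \<in> T" using \<open>zero_obj C Z\<close> closed unfolding closed_additive_subcat_def by blast
  ultimately show thesis
    using that in_T_if_stable_iso_from_T unfolding stable_iso_def by metis
qed

context
  fixes X Y TY K K1 f k p k1 a
  assumes ker: "is_kernel C X Y f K k"
    and pc: "T_precover C T Y TY p" and ker1: "is_kernel C TY Y p K1 k1"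
    and a: "a \<in> hom C TY X" "cmp C f a = p"
begin

lemma comparison_kernel_factor:
  assumes pb: "is_pullback C X0 Y0 T0 f0 p0 Z0 g0 q0"
    and e: "e \<in> hom C X0 X" "cmp C f e = cmp C \<psi> f0"
    and l: "l \<in> hom C T0 TY" "cmp C p l = cmp C \<psi> p0" and \<psi>: "\<psi> \<in> hom C Y0 Y"
  shows "\<exists>\<pi>\<in>hom C Z0 K. cmp C k \<pi> = add C (cmp C e g0) (neg C (cmp C a (cmp C l q0)))"
proof -
  have pbh: "f0 \<in> hom C X0 Y0" "p0 \<in> hom C T0 Y0" "g0 \<in> hom C Z0 X0" "q0 \<in> hom C Z0 T0"
      "cmp C f0 g0 = cmp C p0 q0"
    using pb unfolding is_pullback_def by blast+
  have h: "f \<in> hom C X Y" "p \<in> hom C TY Y"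
    using kernel_hom[OF ker] precover_hom[OF pc] by blast+
  then have "Y \<in> Ob C" "Z0 \<in> Ob C" using pbh by auto
  have "cmp C f (cmp C e g0) = cmp C \<psi> (cmp C p0 q0)"
    using cmp_assoc_subst[of e f g0, OF _ _ _ _ _ e(2)] pbh e(1) h \<psi> by simp
  moreover have "cmp C f (cmp C a (cmp C l q0)) = cmp C \<psi> (cmp C p0 q0)"
    using cmp_assoc_subst[of a f "cmp C l q0", OF _ _ _ _ _ a(2)]
      cmp_assoc_subst[of l p q0, OF _ _ _ _ _ l(2)] pbh a(1) l(1) h \<psi> by simp
  ultimately have "cmp C f (add C (cmp C e g0) (neg C (cmp C a (cmp C l q0)))) = zer C Z0 Y"
    using pbh a(1) l(1) e(1) h \<psi> \<open>Y \<in> Ob C\<close> \<open>Z0 \<in> Ob C\<close> by simp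
  moreover have "add C (cmp C e g0) (neg C (cmp C a (cmp C l q0))) \<in> hom C Z0 X"
    using pbh a(1) l(1) e(1) by simp
  ultimately show ?thesis using kernel_lift[OF ker] by blast
qed

text \<open>t = l \<phi>t composes lifts of \<psi>4 p0 along p and of \<phi>4 p along p0, and
  \<rho> = - \<pi> w0 \<omega> with \<pi> from comparison_kernel_factor and k0 \<omega> = \<phi>t k1.\<close>
lemma comparison_endo:
  assumes std: "std_left_triangle C T K0 Z0 X0 Y0 w0 g0 f0" and "Z0 \<in> T"
    and e: "e \<in> hom C X0 X" "cmp C f e = cmp C \<psi>4 f0"
    and \<phi>4: "\<phi>4 \<in> hom C Y Y0" and \<psi>4: "\<psi>4 \<in> hom C Y0 Y"
  obtains t \<rho> where "t \<in> hom C TY TY" "cmp C p t = cmp C (cmp C \<psi>4 \<phi>4) p"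
    and "\<rho> \<in> hom C K1 K" "cmp C k \<rho> = cmp C a (cmp C t k1)" "T_null K1 K \<rho>"
proof -
  obtain T0 p0 k0 q0 where pc0: "T_precover C T Y0 T0 p0" and ker0: "is_kernel C T0 Y0 p0 K0 k0"
    and pb: "is_pullback C X0 Y0 T0 f0 p0 Z0 g0 q0"
    and w0: "w0 \<in> hom C K0 Z0" "cmp C g0 w0 = zer C K0 X0" "cmp C q0 w0 = k0"
    using std unfolding std_left_triangle_def by blast
  have pbh: "g0 \<in> hom C Z0 X0" "q0 \<in> hom C Z0 T0"
    using pb unfolding is_pullback_def by blast+
  have kh: "k \<in> hom C K X" "k1 \<in> hom C K1 TY" "cmp C p k1 = zer C K1 Y" "k0 \<in> hom C K0 T0"
    using kernel_hom[OF ker] kernel_hom[OF ker1] kernel_hom[OF ker0] by blast+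
  have ph: "TY \<in> T" "p \<in> hom C TY Y" "T0 \<in> T" "p0 \<in> hom C T0 Y0"
    using precover_hom[OF pc] precover_hom[OF pc0] by blast+
  have Ob: "K1 \<in> Ob C" "K0 \<in> Ob C" "X0 \<in> Ob C" "Y0 \<in> Ob C" "Z0 \<in> Ob C"
    using kh pbh \<phi>4 by auto
  note homs = pbh kh ph(2,4) w0(1) e(1) \<phi>4 \<psi>4 a(1) Ob
  obtain l where l: "l \<in> hom C T0 TY" "cmp C p l = cmp C \<psi>4 p0"
    using T_precover_lift[OF pc T_null_if_dom_in_T[OF ph(3), of "cmp C \<psi>4 p0" Y]] homs by auto
  obtain \<phi>t where \<phi>t: "\<phi>t \<in> hom C TY T0" "cmp C p0 \<phi>t = cmp C \<phi>4 p"
    using T_precover_lift[OF pc0 T_null_if_dom_in_T[OF ph(1), of "cmp C \<phi>4 p" Y0]] homs by auto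
  obtain \<pi> where \<pi>: "\<pi> \<in> hom C Z0 K" "cmp C k \<pi> = add C (cmp C e g0) (neg C (cmp C a (cmp C l q0)))"
    using comparison_kernel_factor[OF pb e l \<psi>4] by blast
  have "cmp C p0 (cmp C \<phi>t k1) = zer C K1 Y0"
    using cmp_assoc_subst[of \<phi>t p0 k1, OF _ _ _ _ _ \<phi>t(2)] \<phi>t(1) homs by simp
  moreover have "cmp C \<phi>t k1 \<in> hom C K1 T0" using \<phi>t(1) homs by simp
  ultimately obtain \<omega> where \<omega>: "\<omega> \<in> hom C K1 K0" "cmp C k0 \<omega> = cmp C \<phi>t k1"
    using kernel_lift[OF ker0] by blast
  show thesis
  proof
    show "cmp C l \<phi>t \<in> hom C TY TY" using l(1) \<phi>t(1) by simp
    show "cmp C p (cmp C l \<phi>t) = cmp C (cmp C \<psi>4 \<phi>4) p"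
      using cmp_assoc_subst[of l p \<phi>t, OF _ _ _ _ _ l(2)] \<phi>t l(1) homs by simp
    show "neg C (cmp C \<pi> (cmp C w0 \<omega>)) \<in> hom C K1 K" using \<pi>(1) \<omega>(1) homs by simp
    show "cmp C k (neg C (cmp C \<pi> (cmp C w0 \<omega>))) = cmp C a (cmp C (cmp C l \<phi>t) k1)"
      using cmp_assoc_subst[of \<pi> k "cmp C w0 \<omega>", OF _ _ _ _ _ \<pi>(2)]
        cmp_assoc_subst[of w0 g0 \<omega>, OF _ _ _ _ _ w0(2)] cmp_assoc_subst[of w0 q0 \<omega>, OF _ _ _ _ _ w0(3)]
        \<omega> \<pi>(1) l(1) \<phi>t(1) homs
      by simp
    have "T_null K1 Z0 (cmp C w0 \<omega>)"
      using \<omega>(1) homs by (intro T_null_if_cod_in_T[OF \<open>Z0 \<in> T\<close>]) simp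
    then show "T_null K1 K (neg C (cmp C \<pi> (cmp C w0 \<omega>)))"
      using T_null_cmp_left T_null_neg \<pi>(1) by blast
  qed
qed

text \<open>lm is the connecting map K1 \<rightarrow> K induced by a; precover_endo_on_kernel gives
  lm = lm \<chi> k1 + \<rho>.\<close>
lemma connecting_map_T_null:
  assumes lm: "lm \<in> hom C K1 K" "cmp C k lm = cmp C a k1"
    and h: "h \<in> hom C Y Y" "stable_eq C T Y Y h (idt C Y)"
    and t: "t \<in> hom C TY TY" "cmp C p t = cmp C h p"
    and \<rho>: "\<rho> \<in> hom C K1 K" "cmp C k \<rho> = cmp C a (cmp C t k1)" "T_null K1 K \<rho>"
  shows "T_null K1 K lm"
proof -
  have kh: "k \<in> hom C K X" "k1 \<in> hom C K1 TY" "TY \<in> T"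
    using kernel_hom[OF ker] kernel_hom[OF ker1] precover_hom[OF pc] by blast+
  obtain \<chi> where \<chi>: "\<chi> \<in> hom C TY K1" "cmp C k1 (cmp C \<chi> k1) = add C k1 (neg C (cmp C t k1))"
    using precover_endo_on_kernel[OF pc ker1 h t] by blast
  have "lm = add C (cmp C lm (cmp C \<chi> k1)) \<rho>"
  proof (rule kernel_cancel[OF ker])
    show "lm \<in> hom C K1 K" "add C (cmp C lm (cmp C \<chi> k1)) \<rho> \<in> hom C K1 K"
      using lm(1) \<chi>(1) \<rho>(1) kh by simp_all
    show "cmp C k lm = cmp C k (add C (cmp C lm (cmp C \<chi> k1)) \<rho>)"
      using cmp_assoc_subst[of lm k "cmp C \<chi> k1", OF _ _ _ _ _ lm(2)] \<chi> \<rho>(1,2) lm t(1) kh a(1)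
      by simp
  qed
  moreover have "T_null K1 K (cmp C lm (cmp C \<chi> k1))"
  proof -
    have "T_null TY K (cmp C lm \<chi>)" using \<chi>(1) lm(1) by (intro T_null_if_dom_in_T[OF kh(3)]) simp
    then have "T_null K1 K (cmp C (cmp C lm \<chi>) k1)" using T_null_cmp_right kh(2) by blast
    then show ?thesis using \<chi>(1) lm(1) kh by simp
  qed
  ultimately show ?thesis using T_null_add \<rho>(3) by metis
qed

text \<open>If k factors as s t through T', then id_K = \<sigma> t + lm n, where k \<sigma> = s - a m corrects s by
  a lift m of f s along p, and k1 n = m t.\<close>
lemma in_T_if_kernel_T_null:
  assumes lm: "lm \<in> hom C K1 K" "cmp C k lm = cmp C a k1"
    and "T_null K1 K lm" "T_null K X k"
  shows "K \<in> T"
proof -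
  have kh: "k \<in> hom C K X" "f \<in> hom C X Y" "cmp C f k = zer C K Y" "K \<in> Ob C"
    using kernel_hom[OF ker] by blast+
  have k1h: "k1 \<in> hom C K1 TY" "cmp C p k1 = zer C K1 Y" using kernel_hom[OF ker1] by blast+
  have ph: "TY \<in> T" "p \<in> hom C TY Y" using precover_hom[OF pc] by blast+
  obtain T' t s where ts: "T' \<in> T" "t \<in> hom C K T'" "s \<in> hom C T' X" "k = cmp C s t"
    using assms(4) by (rule T_nullE)
  have Ob: "T' \<in> Ob C" "X \<in> Ob C" "Y \<in> Ob C" using ts T_Ob kh by auto
  obtain m where m: "m \<in> hom C T' TY" "cmp C f s = cmp C p m"
    using T_precover_lift[OF pc T_null_if_dom_in_T[OF ts(1), of "cmp C f s" Y]] ts kh by auto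
  have "cmp C p (cmp C m t) = zer C K Y"
    using cmp_assoc_subst[of m p t "cmp C f s", OF _ _ _ _ _ m(2)[symmetric]] m(1) ts ph kh by simp
  moreover have "cmp C m t \<in> hom C K TY" using m ts by simp
  ultimately obtain n where n: "n \<in> hom C K K1" "cmp C k1 n = cmp C m t"
    using kernel_lift[OF ker1] by blast
  have fam: "cmp C f (cmp C a m) = cmp C p m" using cmp_assoc_subst[of a f m p] a kh m by simp
  have "cmp C f (add C s (neg C (cmp C a m))) = zer C T' Y" using fam m a kh ts ph Ob by simp
  moreover have "add C s (neg C (cmp C a m)) \<in> hom C T' X" using m a ts by simp
  ultimately obtain \<sigma> where \<sigma>: "\<sigma> \<in> hom C T' K" "cmp C k \<sigma> = add C s (neg C (cmp C a m))"
    using kernel_lift[OF ker] by blast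
  have "idt C K = add C (cmp C \<sigma> t) (cmp C lm n)"
  proof (rule kernel_cancel[OF ker])
    show "idt C K \<in> hom C K K" "add C (cmp C \<sigma> t) (cmp C lm n) \<in> hom C K K"
      using \<sigma> ts lm n kh by simp_all
    have "cmp C k (add C (cmp C \<sigma> t) (cmp C lm n))
        = add C (cmp C (add C s (neg C (cmp C a m))) t) (cmp C a (cmp C k1 n))"
      using cmp_assoc_subst[of \<sigma> k t] cmp_assoc_subst[of lm k n] \<sigma> lm n ts kh a k1h by simp
    also have "\<dots> = cmp C k (idt C K)" using n(2) ts a m kh by simp
    finally show "cmp C k (idt C K) = cmp C k (add C (cmp C \<sigma> t) (cmp C lm n))" ..
  qed
  moreover have "T_null K K (cmp C \<sigma> t)"
    using T_null_cmp_left[OF T_null_if_cod_in_T[OF ts(1,2)] \<sigma>(1)] .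
  moreover have "T_null K K (cmp C lm n)" using T_null_cmp_right[OF assms(3) n(1)] .
  ultimately have "T_null K K (idt C K)" using T_null_add by simp
  then show ?thesis using in_T_if_idt_T_null kh by blast
qed

end

end

locale projectively_covered_cat = abelian_stable_cat +
  assumes projective: "\<forall>P\<in>T. projective C P"
    and contravariantly_finite: "contravariantly_finite C T"
begin

lemma projective_lift: "P \<in> T \<Longrightarrow> epi C M N e \<Longrightarrow> g \<in> hom C P N \<Longrightarrow> \<exists>h\<in>hom C P M. cmp C e h = g"
  using projective unfolding projective_def by blast

lemma precover_ex: "Y \<in> Ob C \<Longrightarrow> \<exists>TY p. T_precover C T Y TY p"
  using contravariantly_finite unfolding contravariantly_finite_def by blast

lemma strong_mono_if_kernel_in_T:
  assumes epi: "epi C X Y f" and ker: "is_kernel C X Y f K k" and "K \<in> T"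
  shows "strong_mono C T X Y f"
proof -
  have f: "f \<in> hom C X Y" using epi unfolding epi_def by blast
  then have XY: "X \<in> Ob C" "Y \<in> Ob C" by auto
  then obtain TY p where pc: "T_precover C T Y TY p" using precover_ex by blast
  have p: "TY \<in> T" "p \<in> hom C TY Y" using precover_hom[OF pc] by blast+
  obtain K' k' where ker': "is_kernel C TY Y p K' k'" using kernel_ex p by blast
  have k': "k' \<in> hom C K' TY" "cmp C p k' = zer C K' Y" "K' \<in> Ob C"
    using kernel_hom[OF ker'] by blast+
  obtain a where a: "a \<in> hom C TY X" "cmp C f a = p" using projective_lift[OF p(1) epi p(2)] by blast
  have "K \<in> Ob C" "TY \<in> Ob C" using \<open>K \<in> T\<close> p T_Ob by auto
  then obtain B i1 i2 p1 p2 where B: "is_biproduct C K TY B i1 i2 p1 p2" using biproduct_ex by blast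
  have "B \<in> T" using biproduct_in_T_iff[OF B] \<open>K \<in> T\<close> p by blast
  let ?g = "add C (cmp C k p1) (cmp C a p2)"
  have pb: "is_pullback C X Y TY f p B ?g p2" using biproduct_is_pullback[OF ker a B] .
  obtain w where "w \<in> hom C K' B" "cmp C ?g w = zer C K' X" "cmp C p2 w = k'"
    using pullback_lift[OF pb, of "zer C K' X" K' k'] k' f XY by auto
  then have "std_left_triangle C T K' B X Y w ?g f"
    unfolding std_left_triangle_def using pc ker' pb by blast
  moreover obtain Z0 where "zero_obj C Z0" using zero_obj_ex by blast
  ultimately show ?thesis unfolding strong_mono_def
    using left_triangle_if_std_middle_in_T \<open>B \<in> T\<close> f pc ker' by blast
qed

lemma kernel_in_T_if_strong_mono:
  assumes epi: "epi C X Y f" and ker: "is_kernel C X Y f K k" and "strong_mono C T X Y f"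
  shows "K \<in> T"
proof -
  obtain TY p K1 k1 K0 Z0 X0 Y0 w0 g0 f0 \<phi>3 \<psi>3 \<phi>4 \<psi>4
    where pc: "T_precover C T Y TY p" and ker1: "is_kernel C TY Y p K1 k1"
      and std: "std_left_triangle C T K0 Z0 X0 Y0 w0 g0 f0" and "Z0 \<in> T"
      and \<phi>3: "\<phi>3 \<in> hom C X X0" and \<psi>3: "\<psi>3 \<in> hom C X0 X"
        "stable_eq C T X X (cmp C \<psi>3 \<phi>3) (idt C X)" "stable_eq C T X0 X0 (cmp C \<phi>3 \<psi>3) (idt C X0)"
      and \<phi>4: "\<phi>4 \<in> hom C Y Y0" and \<psi>4: "\<psi>4 \<in> hom C Y0 Y" "stable_eq C T Y Y (cmp C \<psi>4 \<phi>4) (idt C Y)"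
      and sq: "stable_eq C T X Y0 (cmp C f0 \<phi>3) (cmp C \<phi>4 f)"
    using \<open>strong_mono C T X Y f\<close> by (rule strong_monoE)
  have f: "f \<in> hom C X Y" using epi unfolding epi_def by blast
  have k: "k \<in> hom C K X" "cmp C f k = zer C K Y" using kernel_hom[OF ker] by blast+
  have p: "TY \<in> T" "p \<in> hom C TY Y" using precover_hom[OF pc] by blast+
  obtain a where a: "a \<in> hom C TY X" "cmp C f a = p" using projective_lift[OF p(1) epi p(2)] by blast
  have "cmp C f (cmp C a k1) = zer C K1 Y"
    using cmp_assoc_subst[of a f k1 p] a f p kernel_hom[OF ker1] by simp
  then obtain lm where lm: "lm \<in> hom C K1 K" "cmp C k lm = cmp C a k1"
    using kernel_lift[OF ker, of "cmp C a k1" K1] a kernel_hom[OF ker1] by auto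
  have f0: "f0 \<in> hom C X0 Y0" using std_left_triangle_hom[OF std] by blast
  obtain e where e: "e \<in> hom C X0 X" "cmp C f e = cmp C \<psi>4 f0"
    using strict_lift_if_stable_lift[OF pc a f \<psi>3(1)]
      stable_eq_square_inverse[OF sq f f0 \<phi>3 \<phi>4 \<psi>3(1,3) \<psi>4] by blast
  obtain t \<rho> where t: "t \<in> hom C TY TY" "cmp C p t = cmp C (cmp C \<psi>4 \<phi>4) p"
    and \<rho>: "\<rho> \<in> hom C K1 K" "cmp C k \<rho> = cmp C a (cmp C t k1)" "T_null K1 K \<rho>"
    using comparison_endo[OF ker pc ker1 a std \<open>Z0 \<in> T\<close> e \<phi>4 \<psi>4(1)] by blast
  have "T_null K1 K lm"
    using connecting_map_T_null[OF ker pc ker1 a lm _ \<psi>4(2) t \<rho>] \<phi>4 \<psi>4(1) by simp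
  moreover have "T_null K X k"
    using T_null_if_annihilated[OF std \<open>Z0 \<in> T\<close> \<phi>3 \<psi>3(1,2) \<phi>4 sq f k] .
  ultimately show ?thesis using in_T_if_kernel_T_null[OF ker pc ker1 a lm] by blast
qed

end

theorem proposition5p2:
  fixes C :: "('o, 'm) cat" and T :: "'o set"
    and X Y K :: 'o and f k :: 'm
  assumes "abelian C"
    and "closed_additive_subcat C T"
    and "\<forall>P\<in>T. projective C P"
    and "contravariantly_finite C T"
    and "epi C X Y f"
    and "is_kernel C X Y f K k"
  shows "strong_mono C T X Y f \<longleftrightarrow> K \<in> T"
proof -
  have "additive C" using assms(1) unfolding abelian_def by blast
  moreover have "preadditive C" using calculation unfolding additive_def by blast
  ultimately interpret projectively_covered_cat C T
    using assms(1-4) by unfold_locales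
  show ?thesis
    using kernel_in_T_if_strong_mono[OF assms(5,6)] strong_mono_if_kernel_in_T[OF assms(5,6)] by blast
qed

end
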